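(* For all integers $n,m\ge 0$, \[ U_{n+m}(x,y,a;q)=\sum_{k=0}^n {n\brack k}(-1)^kq^{\binom k2}(aq^m)^kP_{n-k}(x,y)\,U_m(x,yq^{n-k},a;q). \]
   Context: $q$ is a fixed complex number with $0<|q|<1$; $(a;q)_n=\prod_{i=0}^{n-1}(1-aq^i)$; ${n\brack k}=\frac{(q;q)_n}{(q;q)_k(q;q)_{n-k}}$. The Cauchy polynomials are $P_n(x,y)=\prod_{i=0}^{n-1}(x-q^iy)$, and the Al-Salam–Carlitz polynomials are $U_n(x,y,a;q)=\sum_{k=0}^n{n\brack k}(-1)^kq^{\binom k2}a^kP_{n-k}(x,y)$. *)

theory Defs
  imports Complex_Main
begin

definition qpoch :: "complex \<Rightarrow> complex \<Rightarrow> nat \<Rightarrow> complex" where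
  "qpoch a q n = (\<Prod>i<n. 1 - a * q ^ i)"

definition qbinom :: "complex \<Rightarrow> nat \<Rightarrow> nat \<Rightarrow> complex" where
  "qbinom q n k = qpoch q q n / (qpoch q q k * qpoch q q (n - k))"

definition cauchyP :: "complex \<Rightarrow> nat \<Rightarrow> complex \<Rightarrow> complex \<Rightarrow> complex" where
  "cauchyP q n x y = (\<Prod>i<n. x - q ^ i * y)"

definition alsalamU :: "complex \<Rightarrow> nat \<Rightarrow> complex \<Rightarrow> complex \<Rightarrow> complex \<Rightarrow> complex" where
  "alsalamU q n x y a =
     (\<Sum>k=0..n. qbinom q n k * (-1) ^ k * q ^ (k choose 2) * a ^ k * cauchyP q (n - k) x y)"

end

theory Submission
  imports Defs
begin

text \<open>
  The q-Pascal rule for the Gaussian coefficients gives the recurrence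
  U_{N+1}(x,y,a) = (x - y) U_N(x,yq,aq) - a U_N(x,y,aq).
  The expansion of U_{n+m} then follows by induction on m: both sides satisfy
  this recurrence in m, because (x - y) P_j(x,yq) = P_j(x,y) (x - yq^j).
\<close>

lemma power_Suc_neq_one:
  fixes q :: "'a::real_normed_div_algebra"
  assumes "norm q < 1"
  shows "q ^ Suc i \<noteq> 1"
proof
  assume "q ^ Suc i = 1"
  then have "norm q ^ Suc i = 1"
    by (metis norm_one norm_power)
  moreover have "norm q ^ Suc i < 1"
    using assms power_less_one_iff[of "norm q" "Suc i"] by simp
  ultimately show False
    by simp
qed

lemma qpoch_Suc: "qpoch a q (Suc n) = qpoch a q n * (1 - a * q ^ n)"
  by (simp add: qpoch_def)

lemma qpoch_nonzero:
  assumes "\<And>i. q ^ Suc i \<noteq> 1"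
  shows "qpoch q q n \<noteq> 0"
  using assms by (auto simp: qpoch_def)

lemma qbinom_0:
  assumes "\<And>i. q ^ Suc i \<noteq> 1"
  shows "qbinom q n 0 = 1"
  using qpoch_nonzero[OF assms, of n] by (simp add: qbinom_def qpoch_def)

lemma qbinom_self:
  assumes "\<And>i. q ^ Suc i \<noteq> 1"
  shows "qbinom q n n = 1"
  using qpoch_nonzero[OF assms, of n] by (simp add: qbinom_def qpoch_def)

lemma qbinom_pascal:
  assumes q: "\<And>i. q ^ Suc i \<noteq> 1" and "k < N"
  shows "qbinom q (Suc N) (Suc k) = qbinom q N k + q ^ Suc k * qbinom q N (Suc k)"
proof -
  obtain d where N: "N = k + Suc d"
    using \<open>k < N\<close> less_iff_Suc_add by auto
  have nz: "qpoch q q j \<noteq> 0" "1 - q ^ Suc j \<noteq> 0" for j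
    using qpoch_nonzero[OF q] q[of j] by auto
  define A where "A = qpoch q q N"
  have "qpoch q q (Suc N) = A * (1 - q ^ Suc k * q ^ Suc d)"
    by (simp add: A_def qpoch_Suc N flip: power_add)
  moreover have "qpoch q q (Suc k) = qpoch q q k * (1 - q ^ Suc k)"
    and "qpoch q q (Suc d) = qpoch q q d * (1 - q ^ Suc d)"
    by (simp_all add: qpoch_Suc)
  moreover have "Suc N - Suc k = Suc d" "N - k = Suc d" "N - Suc k = d"
    by (simp_all add: N)
  moreover have field_id: "A * (1 - u * v) / (B * (1 - u) * (C * (1 - v)))
      = A / (B * (C * (1 - v))) + u * (A / (B * (1 - u) * C))"
    if "B \<noteq> 0" "C \<noteq> 0" "1 - u \<noteq> 0" "1 - v \<noteq> 0" for B C u v :: complex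
    using that by (simp add: divide_simps) (simp add: algebra_simps)
  ultimately show ?thesis
    using field_id[of "qpoch q q k" "qpoch q q d" "q ^ Suc k" "q ^ Suc d"] nz
    unfolding qbinom_def A_def[symmetric] by (simp add: mult_ac)
qed

text \<open>
  Extending the q-binomial coefficient by zero beyond \<open>k = N\<close> lets the
  q-Pascal rule hold for every \<open>k \<le> N + 1\<close>.
\<close>

definition qbinom_ext :: "complex \<Rightarrow> nat \<Rightarrow> nat \<Rightarrow> complex" where
  "qbinom_ext q N k = (if k \<le> N then qbinom q N k else 0)"

lemma qbinom_ext_pascal:
  assumes q: "\<And>i. q ^ Suc i \<noteq> 1" and "k \<le> Suc N"
  shows "qbinom_ext q (Suc N) k
    = (if k = 0 then 0 else qbinom_ext q N (k - 1)) + q ^ k * qbinom_ext q N k"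
proof (cases k)
  case 0
  then show ?thesis
    by (simp add: qbinom_ext_def qbinom_0[OF q])
next
  case (Suc j)
  then consider "j < N" | "j = N"
    using \<open>k \<le> Suc N\<close> by linarith
  then show ?thesis
    by cases (use Suc in \<open>auto simp: qbinom_ext_def qbinom_pascal[OF q] qbinom_self[OF q]\<close>)
qed

lemma cauchyP_Suc_left: "cauchyP q (Suc n) x y = (x - y) * cauchyP q n x (y * q)"
  unfolding cauchyP_def by (subst prod.lessThan_Suc_shift) (simp add: mult_ac)

lemma cauchyP_Suc: "cauchyP q (Suc n) x y = cauchyP q n x y * (x - q ^ n * y)"
  unfolding cauchyP_def by simp

lemma cauchyP_shift: "(x - y) * cauchyP q n x (y * q) = cauchyP q n x y * (x - y * q ^ n)"
  by (metis cauchyP_Suc cauchyP_Suc_left mult.commute)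

lemma alsalamU_0: "alsalamU q 0 x y a = 1"
  by (simp add: alsalamU_def cauchyP_def qbinom_def qpoch_def binomial_eq_0)

lemma alsalamU_Suc:
  assumes q: "\<And>i. q ^ Suc i \<noteq> 1"
  shows "alsalamU q (Suc N) x y a
    = (x - y) * alsalamU q N x (y * q) (a * q) - a * alsalamU q N x y (a * q)"
proof -
  define t where "t l = (-1) ^ l * q ^ (l choose 2) * a ^ l * cauchyP q (Suc N - l) x y" for l
  have "alsalamU q (Suc N) x y a = (\<Sum>l=0..Suc N. qbinom_ext q (Suc N) l * t l)"
    unfolding alsalamU_def t_def by (rule sum.cong) (auto simp: qbinom_ext_def)
  also have "\<dots> = (\<Sum>l=0..Suc N. (if l = 0 then 0 else qbinom_ext q N (l - 1)) * t l)
      + (\<Sum>l=0..Suc N. q ^ l * qbinom_ext q N l * t l)"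
    by (subst sum.distrib[symmetric], rule sum.cong)
      (auto simp: qbinom_ext_pascal[OF q] algebra_simps)
  also have "(\<Sum>l=0..Suc N. (if l = 0 then 0 else qbinom_ext q N (l - 1)) * t l)
      = (\<Sum>l=0..N. qbinom_ext q N l * t (Suc l))"
    by (subst sum.atLeast0_atMost_Suc_shift) simp
  also have "\<dots> = - a * alsalamU q N x y (a * q)"
    unfolding alsalamU_def sum_distrib_left
    by (rule sum.cong)
      (auto simp: t_def qbinom_ext_def numeral_2_eq_2 power_add power_mult_distrib algebra_simps)
  also have "(\<Sum>l=0..Suc N. q ^ l * qbinom_ext q N l * t l)
      = (\<Sum>l=0..N. q ^ l * qbinom_ext q N l * t l)"
    by (simp add: qbinom_ext_def)
  also have "\<dots> = (x - y) * alsalamU q N x (y * q) (a * q)"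
    unfolding alsalamU_def sum_distrib_left
  proof (rule sum.cong)
    fix l assume "l \<in> {0..N}"
    then have "Suc N - l = Suc (N - l)"
      by simp
    with \<open>l \<in> {0..N}\<close> show "q ^ l * qbinom_ext q N l * t l
      = (x - y) * (qbinom q N l * (-1) ^ l * q ^ (l choose 2) * (a * q) ^ l
          * cauchyP q (N - l) x (y * q))"
      by (simp add: t_def qbinom_ext_def cauchyP_Suc_left power_mult_distrib algebra_simps)
  qed simp
  finally show ?thesis
    by simp
qed

lemma alsalamU_add:
  assumes q: "\<And>i. q ^ Suc i \<noteq> 1"
  shows "alsalamU q (n + m) x y a =
    (\<Sum>k=0..n. qbinom q n k * (-1) ^ k * q ^ (k choose 2) * (a * q ^ m) ^ k
        * cauchyP q (n - k) x y * alsalamU q m x (y * q ^ (n - k)) a)"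
proof (induction m arbitrary: y a)
  case 0
  show ?case
    by (simp add: alsalamU_0) (simp add: alsalamU_def)
next
  case (Suc m)
  have "alsalamU q (n + Suc m) x y a
      = (x - y) * alsalamU q (n + m) x (y * q) (a * q) - a * alsalamU q (n + m) x y (a * q)"
    using alsalamU_Suc[OF q] by simp
  also have "\<dots> = (\<Sum>k=0..n. qbinom q n k * (-1) ^ k * q ^ (k choose 2) * (a * q ^ Suc m) ^ k
        * cauchyP q (n - k) x y * alsalamU q (Suc m) x (y * q ^ (n - k)) a)"
    unfolding Suc.IH sum_distrib_left sum_subtractf[symmetric]
  proof (intro sum.cong refl)
    fix k
    have factor: "(x - y) * (c * cauchyP q (n - k) x (y * q) * U) - a * (c * cauchyP q (n - k) x y * V)
        = c * cauchyP q (n - k) x y * ((x - y * q ^ (n - k)) * U - a * V)" for c U V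
    proof -
      have "(x - y) * (c * cauchyP q (n - k) x (y * q) * U)
          = c * ((x - y) * cauchyP q (n - k) x (y * q)) * U"
        by (simp add: mult_ac)
      then show ?thesis
        unfolding cauchyP_shift by (simp add: algebra_simps)
    qed
    have y_shift: "y * q * q ^ (n - k) = y * q ^ (n - k) * q"
      by (simp add: mult_ac)
    show "(x - y) * (qbinom q n k * (-1) ^ k * q ^ (k choose 2) * (a * q * q ^ m) ^ k
          * cauchyP q (n - k) x (y * q) * alsalamU q m x (y * q * q ^ (n - k)) (a * q))
        - a * (qbinom q n k * (-1) ^ k * q ^ (k choose 2) * (a * q * q ^ m) ^ k
          * cauchyP q (n - k) x y * alsalamU q m x (y * q ^ (n - k)) (a * q))
        = qbinom q n k * (-1) ^ k * q ^ (k choose 2) * (a * q ^ Suc m) ^ k * cauchyP q (n - k) x y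
          * alsalamU q (Suc m) x (y * q ^ (n - k)) a"
      unfolding alsalamU_Suc[OF q] power_Suc mult.assoc[of a q] y_shift by (rule factor)
  qed
  finally show ?case .
qed

theorem mainTheorem3:
  fixes q x y a :: complex and n m :: nat
  assumes "0 < cmod q" and "cmod q < 1"
  shows "alsalamU q (n + m) x y a =
    (\<Sum>k=0..n. qbinom q n k * (-1) ^ k * q ^ (k choose 2) * (a * q ^ m) ^ k
        * cauchyP q (n - k) x y * alsalamU q m x (y * q ^ (n - k)) a)"
  using alsalamU_add power_Suc_neq_one[OF \<open>cmod q < 1\<close>] by blast

end
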